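(* Let $\alpha>-1$, $\beta>-1$, $c>0$, $\omega_{\alpha,\beta}(x)=(1-x)^{\alpha}(1+x)^{\beta}$, $\mathcal{H}=L^2((-1,1),\omega_{\alpha,\beta}(x)dx)$, and $\mathcal{F}_c^{(\alpha,\beta)}[\phi](x)=\int_{-1}^{1}e^{c(xy-1)}\phi(y)\omega_{\alpha,\beta}(y)dy$ for $\phi\in\mathcal{H}$, $x\in(-1,1)$. Let $$LB^c_{\omega_{\alpha,\beta}}=\Big\{f(x)=\int_{-1}^{1}e^{c(xy-1)}g(y)\omega_{\alpha,\beta}(y)dy:\ g\in\mathcal{H}\Big\}$$ be the space of bilateral weighted Laplace bandlimited functions, equipped with the inner product $\langle f_1,f_2\rangle_{\widetilde{\mathcal H}}=\langle g_1,g_2\rangle_{\mathcal H}$ whenever $f_i=\mathcal{F}_c^{(\alpha,\beta)}[g_i]$, $g_i\in\mathcal{H}$. Let $\{\psi_n^{(\alpha,\beta)}(\cdot;c)\}_{n\ge0}$ be the eigenfunctions of $\mathcal{F}_c^{(\alpha,\beta)}$ with eigenvalues $\mu_n^{(\alpha,\beta)}(c)$, normalized so that $\int_{-1}^1\psi_n^{(\alpha,\beta)}(x;c)\psi_m^{(\alpha,\beta)}(x;c)\omega_{\alpha,\beta}(x)dx=(\mu_n^{(\alpha,\beta)}(c))^2\delta_{mn}$. Then $\{\psi_n^{(\alpha,\beta)}(\cdot;c)\}_{n=0}^\infty$ is a complete orthogonal system of $LB^c_{\omega_{\alpha,\beta}}$.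
   Context: The map $g\mapsto\mathcal{F}_c^{(\alpha,\beta)}[g]$ is injective on $\mathcal H$, so the inner product $\langle\cdot,\cdot\rangle_{\widetilde{\mathcal H}}$ on $LB^c_{\omega_{\alpha,\beta}}$ is well defined. $\delta_{mn}$ is the Kronecker delta. *)

theory Defs
  imports "HOL-Analysis.Analysis"
begin

definition jac_w :: "real \<Rightarrow> real \<Rightarrow> real \<Rightarrow> real" where
  "jac_w \<alpha> \<beta> x = (1 - x) powr \<alpha> * (1 + x) powr \<beta>"

definition jac_M :: "real \<Rightarrow> real \<Rightarrow> real measure" where
  "jac_M \<alpha> \<beta> = density (restrict_space lborel {-1<..<1}) (\<lambda>x. ennreal (jac_w \<alpha> \<beta> x))"

definition inH :: "real \<Rightarrow> real \<Rightarrow> (real \<Rightarrow> real) \<Rightarrow> bool" where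
  "inH \<alpha> \<beta> g \<longleftrightarrow> g \<in> borel_measurable (jac_M \<alpha> \<beta>) \<and> integrable (jac_M \<alpha> \<beta>) (\<lambda>x. (g x)\<^sup>2)"

definition H_inner :: "real \<Rightarrow> real \<Rightarrow> (real \<Rightarrow> real) \<Rightarrow> (real \<Rightarrow> real) \<Rightarrow> real" where
  "H_inner \<alpha> \<beta> g1 g2 = (LINT x | jac_M \<alpha> \<beta>. g1 x * g2 x)"

definition Fc :: "real \<Rightarrow> real \<Rightarrow> real \<Rightarrow> (real \<Rightarrow> real) \<Rightarrow> real \<Rightarrow> real" where
  "Fc \<alpha> \<beta> c \<phi> x = (LINT y | jac_M \<alpha> \<beta>. exp (c * (x * y - 1)) * \<phi> y)"

text \<open>The space LB^c_omega: functions on (-1,1) of the form F_c[g], g in H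
  (values outside (-1,1) are irrelevant).\<close>
definition LB :: "real \<Rightarrow> real \<Rightarrow> real \<Rightarrow> (real \<Rightarrow> real) set" where
  "LB \<alpha> \<beta> c = {f. \<exists>g. inH \<alpha> \<beta> g \<and> (\<forall>x\<in>{-1<..<1}. f x = Fc \<alpha> \<beta> c g x)}"

text \<open>A preimage g in H of f (unique up to null sets by injectivity of F_c).\<close>
definition LB_pre :: "real \<Rightarrow> real \<Rightarrow> real \<Rightarrow> (real \<Rightarrow> real) \<Rightarrow> (real \<Rightarrow> real)" where
  "LB_pre \<alpha> \<beta> c f = (SOME g. inH \<alpha> \<beta> g \<and> (\<forall>x\<in>{-1<..<1}. f x = Fc \<alpha> \<beta> c g x))"

definition LB_inner :: "real \<Rightarrow> real \<Rightarrow> real \<Rightarrow> (real \<Rightarrow> real) \<Rightarrow> (real \<Rightarrow> real) \<Rightarrow> real" where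
  "LB_inner \<alpha> \<beta> c f1 f2 = H_inner \<alpha> \<beta> (LB_pre \<alpha> \<beta> c f1) (LB_pre \<alpha> \<beta> c f2)"

end

theory Submission
  imports Defs "HOL-Library.Diagonal_Subsequence"
begin

text \<open>
  With the Poisson weights \<open>p k = exp (-c) * c ^ k / fact k\<close> the kernel expands as
  \<open>exp (c * (x * y - 1)) = (\<Sum>k. p k * (x * y) ^ k)\<close>, hence
  \<open>\<langle>F u, v\<rangle> = (\<Sum>k. p k * m k u * m k v)\<close> for the moments \<open>m k g = \<integral> y ^ k * g y\<close>.
  So \<open>F\<close> is symmetric and positive semidefinite, and it is compact: the moments are bounded by
  the \<open>L\<^sup>1\<close> norm, and along a subsequence on which all moments converge, \<open>F g\<close> converges
  pointwise and boundedly (Tannery's theorem).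

  \<open>F\<close> maps the orthogonal complement \<open>V\<close> of the \<open>\<psi> n\<close> into itself, and \<open>V\<close> contains no
  eigenfunction, since by hypothesis every eigenfunction lies in the span of the \<open>\<psi> n\<close>. With
  eigenvalue \<open>0\<close> this makes \<open>F\<close> injective, so \<open>LB_pre\<close> is determined up to null sets; as
  \<open>\<psi> n = F (\<psi> n / \<mu> n)\<close>, the \<open>\<psi> n\<close> lie in \<open>LB\<close> and are orthonormal there. If the supremum
  \<open>s\<close> of \<open>\<langle>F g, g\<rangle>\<close> over the unit ball of \<open>V\<close> were positive, compactness would turn a
  maximising sequence into an eigenfunction in \<open>V\<close> with eigenvalue \<open>s\<close>. Hence \<open>F\<close> vanishes on
  \<open>V\<close>, and an element \<open>F g\<close> of \<open>LB\<close> orthogonal to all \<open>\<psi> n\<close> has \<open>g \<in> V\<close>, hence vanishes.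
\<close>

lemma quadratic_nonneg_imp_discriminant_le:
  fixes a b c :: real
  assumes nonneg: "\<And>t. 0 \<le> a * t\<^sup>2 - 2 * b * t + c" and "0 \<le> a"
  shows "b\<^sup>2 \<le> a * c"
proof (cases "a = 0")
  case True
  have "b = 0"
  proof (rule ccontr)
    assume "b \<noteq> 0"
    then show False using nonneg[of "(c + 1) / (2 * b)"] True by (simp add: field_simps)
  qed
  then show ?thesis using nonneg[of 0] True by simp
next
  case False
  with \<open>0 \<le> a\<close> have "0 < a" by simp
  have "0 \<le> a * (b / a)\<^sup>2 - 2 * b * (b / a) + c" by (rule nonneg)
  also have "\<dots> = (a * c - b\<^sup>2) / a" using \<open>0 < a\<close> by (simp add: field_simps power2_eq_square)
  finally show ?thesis using \<open>0 < a\<close> by (simp add: zero_le_divide_iff)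
qed

lemma Cauchy_Schwarz_symmetric_form:
  fixes B :: "('a \<Rightarrow> real) \<Rightarrow> ('a \<Rightarrow> real) \<Rightarrow> real"
  assumes closed: "\<And>u v s t. u \<in> S \<Longrightarrow> v \<in> S \<Longrightarrow> (\<lambda>x. s * u x + t * v x) \<in> S"
    and linear: "\<And>u v h s t. u \<in> S \<Longrightarrow> v \<in> S \<Longrightarrow> h \<in> S \<Longrightarrow>
      B (\<lambda>x. s * u x + t * v x) h = s * B u h + t * B v h"
    and sym: "\<And>u v. u \<in> S \<Longrightarrow> v \<in> S \<Longrightarrow> B u v = B v u"
    and nonneg: "\<And>u. u \<in> S \<Longrightarrow> 0 \<le> B u u"
    and u: "u \<in> S" and v: "v \<in> S"
  shows "(B u v)\<^sup>2 \<le> B u u * B v v"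
proof (rule quadratic_nonneg_imp_discriminant_le)
  fix t
  define w where "w = (\<lambda>x. t * u x + (-1) * v x)"
  have w: "w \<in> S" unfolding w_def by (rule closed[OF u v])
  have "B w w = t * B u w + (-1) * B v w" unfolding w_def by (rule linear[OF u v w[unfolded w_def]])
  also have "\<dots> = t * (t * B u u + (-1) * B v u) + (-1) * (t * B u v + (-1) * B v v)"
    using linear[OF u v u, of t "-1"] linear[OF u v v, of t "-1"] sym[OF u w] sym[OF v w]
    unfolding w_def by metis
  also have "\<dots> = B u u * t\<^sup>2 - 2 * B u v * t + B v v"
    using sym[OF u v] by (simp add: power2_eq_square algebra_simps)
  finally show "0 \<le> B u u * t\<^sup>2 - 2 * B u v * t + B v v" using nonneg[OF w] by simp
qed (rule nonneg[OF u])

lemma bounded_double_seq_diagonal_convergent: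
  fixes X :: "nat \<Rightarrow> nat \<Rightarrow> real"
  assumes bound: "\<And>j k. \<bar>X j k\<bar> \<le> B"
  obtains r where "strict_mono r" "\<And>k. convergent (\<lambda>j. X (r j) k)"
proof -
  interpret subseqs "\<lambda>k s. convergent (\<lambda>j. X (s j) k)"
  proof
    fix k and s :: "nat \<Rightarrow> nat"
    have "bounded (range (\<lambda>j. X (s j) k))"
      unfolding bounded_iff using bound by auto
    then obtain l r where "strict_mono r" "((\<lambda>j. X (s j) k) \<circ> r) \<longlonglongrightarrow> l"
      using bounded_imp_convergent_subsequence by blast
    then show "\<exists>r. strict_mono r \<and> convergent (\<lambda>j. X ((s \<circ> r) j) k)"
      by (auto simp: convergent_def o_def)
  qed
  have "convergent (\<lambda>j. X (diagseq j) k)" for k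
  proof -
    have "convergent (\<lambda>j. X ((diagseq \<circ> (+) (Suc k)) j) k)"
    proof (rule diagseq_holds)
      fix r s n assume "strict_mono (r :: nat \<Rightarrow> nat)" "convergent (\<lambda>j. X (s j) n)"
      then show "convergent (\<lambda>j. X ((s \<circ> r) j) n)"
        using convergent_subseq_convergent[of "\<lambda>j. X (s j) n" r] by (simp add: o_def)
    qed
    then show ?thesis
      using convergent_ignore_initial_segment[of "\<lambda>j. X (diagseq j) k" "Suc k"]
      by (simp add: o_def add.commute)
  qed
  then show ?thesis using subseq_diagseq that by blast
qed

lemma powr_le_max_one_two_powr:
  fixes y e :: real
  assumes "1 \<le> y" "y \<le> 2"
  shows "y powr e \<le> max 1 (2 powr e)"
proof (cases "e \<ge> 0")
  case True
  then have "y powr e \<le> 2 powr e" using assms by (intro powr_mono2) auto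
  then show ?thesis by linarith
next
  case False
  then have "y powr e \<le> y powr 0" using assms by (intro powr_mono) auto
  then show ?thesis using assms by simp
qed

lemma jac_w_le:
  assumes "-1 < x" "x < 1"
  shows "jac_w \<alpha> \<beta> x \<le> max 1 (2 powr \<beta>) * (1 - x) powr \<alpha> + max 1 (2 powr \<alpha>) * (1 + x) powr \<beta>"
proof (cases "x \<ge> 0")
  case True
  have "(1 + x) powr \<beta> \<le> max 1 (2 powr \<beta>)" using assms True by (intro powr_le_max_one_two_powr) auto
  then have "jac_w \<alpha> \<beta> x \<le> max 1 (2 powr \<beta>) * (1 - x) powr \<alpha>"
    unfolding jac_w_def by (simp add: mult.commute mult_left_mono)
  then show ?thesis by (smt (verit) mult_nonneg_nonneg powr_ge_zero max.cobounded1)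
next
  case False
  have "(1 - x) powr \<alpha> \<le> max 1 (2 powr \<alpha>)" using assms False by (intro powr_le_max_one_two_powr) auto
  then have "jac_w \<alpha> \<beta> x \<le> max 1 (2 powr \<alpha>) * (1 + x) powr \<beta>"
    unfolding jac_w_def by (simp add: mult_right_mono)
  then show ?thesis by (smt (verit) mult_nonneg_nonneg powr_ge_zero max.cobounded1)
qed

lemma integrable_powr_on_0_2:
  fixes e :: real
  assumes "e > -1"
  shows "integrable lborel (\<lambda>t. indicator {0<..2} t * t powr e :: real)"
proof -
  have "integrable lebesgue (\<lambda>t. indicator {0<..2} t *\<^sub>R t powr e :: real)"
    using assms
    by (intro nonnegative_absolutely_integrable_1 [unfolded set_integrable_def]
        integrable_on_powr_from_0') auto
  then show ?thesis by (subst integrable_completion[symmetric]) auto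
qed

lemma finite_measure_jac_M:
  assumes "\<alpha> > -1" "\<beta> > -1"
  shows "finite_measure (jac_M \<alpha> \<beta>)"
proof -
  let ?Ka = "max 1 (2 powr \<alpha>)" and ?Kb = "max 1 (2 powr \<beta>)"
  have "integrable lborel (\<lambda>x. indicator {0<..2} (1 + (-1) * x) * (1 + (-1) * x) powr \<alpha> :: real)"
    by (rule lborel_integrable_real_affine[OF integrable_powr_on_0_2[OF assms(1)]]) simp
  moreover have "integrable lborel (\<lambda>x. indicator {0<..2} (1 + 1 * x) * (1 + 1 * x) powr \<beta> :: real)"
    by (rule lborel_integrable_real_affine[OF integrable_powr_on_0_2[OF assms(2)]]) simp
  ultimately have "integrable lborel (\<lambda>x. ?Kb * (indicator {0<..2} (1 - x) * (1 - x) powr \<alpha>)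
      + ?Ka * (indicator {0<..2} (1 + x) * (1 + x) powr \<beta>) :: real)"
    by (intro Bochner_Integration.integrable_add integrable_mult_right) simp_all
  then have "integrable lborel (\<lambda>x. indicator {-1<..<1} x * jac_w \<alpha> \<beta> x :: real)"
  proof (rule Bochner_Integration.integrable_bound)
    show "(\<lambda>x. indicator {-1<..<1} x * jac_w \<alpha> \<beta> x :: real) \<in> borel_measurable lborel"
      unfolding jac_w_def by measurable
    show "AE x in lborel. norm (indicator {-1<..<1} x * jac_w \<alpha> \<beta> x :: real)
      \<le> norm (?Kb * (indicator {0<..2} (1 - x) * (1 - x) powr \<alpha>)
          + ?Ka * (indicator {0<..2} (1 + x) * (1 + x) powr \<beta>))"
      using jac_w_le[of x \<alpha> \<beta> for x]
      by (intro AE_I2) (auto simp: indicator_def jac_w_def)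
  qed
  then have "(\<integral>\<^sup>+x. ennreal (indicator {-1<..<1} x * jac_w \<alpha> \<beta> x) \<partial>lborel) < \<infinity>"
    by (auto simp: integrable_iff_bounded jac_w_def)
  moreover have "emeasure (jac_M \<alpha> \<beta>) (space (jac_M \<alpha> \<beta>))
      = (\<integral>\<^sup>+x. ennreal (indicator {-1<..<1} x * jac_w \<alpha> \<beta> x) \<partial>lborel)"
    unfolding jac_M_def
    by (subst emeasure_density)
       (auto simp: space_restrict_space nn_integral_restrict_space jac_w_def indicator_def
        sets_restrict_space_iff intro!: measurable_restrict_space1 nn_integral_cong)
  ultimately show ?thesis by (intro finite_measureI) simp
qed

definition poisson_weight :: "real \<Rightarrow> nat \<Rightarrow> real" where
  "poisson_weight c k = exp (-c) * c ^ k / fact k"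

definition moment :: "real measure \<Rightarrow> nat \<Rightarrow> (real \<Rightarrow> real) \<Rightarrow> real" where
  "moment N k g = (LINT y|N. y ^ k * g y)"

lemma exp_sums: "(\<lambda>k. (y::real) ^ k / fact k) sums exp y"
  using exp_converges[of y] by (simp add: divide_inverse_commute)

lemma poisson_weight_pos: "c > 0 \<Longrightarrow> poisson_weight c k > 0"
  by (simp add: poisson_weight_def)

lemma sums_poisson_weight: "poisson_weight c sums 1"
proof -
  have "(\<lambda>k. exp (-c) * (c ^ k / fact k)) sums (exp (-c) * exp c)"
    by (intro sums_mult exp_sums)
  then show ?thesis unfolding poisson_weight_def by (simp add: exp_add[symmetric])
qed

lemma summable_poisson_weight: "summable (\<lambda>k. poisson_weight c k * B)"
  using sums_poisson_weight by (intro summable_mult2 sums_summable)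

lemma exp_kernel_sums: "(\<lambda>k. poisson_weight c k * (x * y) ^ k) sums exp (c * (x * y - 1))"
proof -
  have "(\<lambda>k. exp (-c) * ((c * (x * y)) ^ k / fact k)) sums (exp (-c) * exp (c * (x * y)))"
    by (intro sums_mult exp_sums)
  moreover have "exp (-c) * exp (c * (x * y)) = exp (c * (x * y - 1))"
    by (simp add: exp_add[symmetric] algebra_simps)
  ultimately show ?thesis
    by (simp add: poisson_weight_def power_mult_distrib mult.assoc)
qed

locale laplace_jacobi =
  fixes \<alpha> \<beta> c :: real
  assumes alpha_gt: "\<alpha> > -1" and beta_gt: "\<beta> > -1" and c_pos: "c > 0"
begin

abbreviation "M \<equiv> jac_M \<alpha> \<beta>"
abbreviation "in_H \<equiv> inH \<alpha> \<beta>"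
abbreviation "inner_H \<equiv> H_inner \<alpha> \<beta>"
abbreviation "F \<equiv> Fc \<alpha> \<beta> c"
abbreviation norm_L1 :: "(real \<Rightarrow> real) \<Rightarrow> real" where "norm_L1 g \<equiv> LINT x|M. \<bar>g x\<bar>"

lemma finite_measure_M: "finite_measure M"
  using alpha_gt beta_gt by (rule finite_measure_jac_M)

lemma space_M [simp]: "space M = {-1<..<1}"
  by (simp add: jac_M_def space_restrict_space)

lemma borel_measurable_M: "f \<in> borel_measurable borel \<Longrightarrow> f \<in> borel_measurable M"
  by (simp add: jac_M_def measurable_restrict_space1)

lemma integrable_M_const: "integrable M (\<lambda>x. r :: real)"
  using finite_measure_M by (rule finite_measure.integrable_const)

lemma in_H_measurable: "in_H g \<Longrightarrow> g \<in> borel_measurable M"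
  unfolding inH_def by blast

lemma in_H_integrable_square: "in_H g \<Longrightarrow> integrable M (\<lambda>x. (g x)\<^sup>2)"
  unfolding inH_def by blast

lemma in_H_bounded:
  assumes "g \<in> borel_measurable M" "\<And>x. x \<in> space M \<Longrightarrow> \<bar>g x\<bar> \<le> B"
  shows "in_H g"
proof -
  have "integrable M (\<lambda>x. (g x)\<^sup>2)"
  proof (rule Bochner_Integration.integrable_bound[OF integrable_M_const])
    show "AE x in M. norm ((g x)\<^sup>2) \<le> norm (B\<^sup>2)"
    proof (rule AE_I2)
      fix x assume "x \<in> space M"
      then have "\<bar>g x\<bar>\<^sup>2 \<le> B\<^sup>2" using assms(2) by (intro power_mono) auto
      then show "norm ((g x)\<^sup>2) \<le> norm (B\<^sup>2)" by simp
    qed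
  qed (use assms(1) in auto)
  then show ?thesis using assms(1) unfolding inH_def by blast
qed

lemma integrable_in_H_mult:
  assumes "in_H f" "in_H g"
  shows "integrable M (\<lambda>x. f x * g x)"
proof (rule Bochner_Integration.integrable_bound)
  show "integrable M (\<lambda>x. (f x)\<^sup>2 + (g x)\<^sup>2)"
    using assms by (auto intro: in_H_integrable_square)
  show "AE x in M. norm (f x * g x) \<le> norm ((f x)\<^sup>2 + (g x)\<^sup>2)"
  proof (rule AE_I2)
    fix x
    have "2 * \<bar>f x\<bar> * \<bar>g x\<bar> \<le> \<bar>f x\<bar>\<^sup>2 + \<bar>g x\<bar>\<^sup>2" by (rule sum_squares_bound)
    moreover have "\<bar>f x * g x\<bar> \<le> 2 * \<bar>f x\<bar> * \<bar>g x\<bar>" by (simp add: abs_mult)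
    ultimately show "norm (f x * g x) \<le> norm ((f x)\<^sup>2 + (g x)\<^sup>2)" by simp
  qed
  show "(\<lambda>x. f x * g x) \<in> borel_measurable M"
    using assms by (intro borel_measurable_times in_H_measurable)
qed

lemma in_H_const: "in_H (\<lambda>x. r)"
  by (rule in_H_bounded[of _ "\<bar>r\<bar>"]) auto

lemma in_H_integrable: "in_H g \<Longrightarrow> integrable M g"
  using integrable_in_H_mult[of g "\<lambda>x. 1"] in_H_const by simp

lemma in_H_lincomb:
  assumes "in_H u" "in_H v"
  shows "in_H (\<lambda>x. s * u x + t * v x)"
proof -
  have "integrable M (\<lambda>x. s\<^sup>2 * (u x)\<^sup>2 + t\<^sup>2 * (v x)\<^sup>2 + (2 * s * t) * (u x * v x))"
    using assms by (intro Bochner_Integration.integrable_add integrable_mult_right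
        in_H_integrable_square integrable_in_H_mult)
  then have "integrable M (\<lambda>x. (s * u x + t * v x)\<^sup>2)"
    by (simp add: power2_sum power_mult_distrib mult_ac)
  moreover have "(\<lambda>x. s * u x + t * v x) \<in> borel_measurable M"
    using assms by (intro borel_measurable_add borel_measurable_times borel_measurable_const in_H_measurable)
  ultimately show ?thesis unfolding inH_def by blast
qed

lemma in_H_cmult: "in_H u \<Longrightarrow> in_H (\<lambda>x. t * u x)"
  using in_H_lincomb[of u u t 0] by simp

lemma in_H_sum: "(\<And>k. k \<in> K \<Longrightarrow> in_H (f k)) \<Longrightarrow> in_H (\<lambda>x. \<Sum>k\<in>K. f k x)"
proof (induction K rule: infinite_finite_induct)
  case (insert k K)
  then show ?case using in_H_lincomb[of "f k" "\<lambda>x. \<Sum>k\<in>K. f k x" 1 1] by simp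
qed (simp_all add: in_H_const)

lemma in_H_abs: "in_H g \<Longrightarrow> in_H (\<lambda>x. \<bar>g x\<bar>)"
  unfolding inH_def by auto

lemma inner_H_commute: "inner_H f g = inner_H g f"
  unfolding H_inner_def by (simp only: mult.commute)

lemma inner_H_self_nonneg: "0 \<le> inner_H f f"
  by (simp add: H_inner_def)

lemma inner_H_self_eq_0_iff:
  assumes "in_H f"
  shows "inner_H f f = 0 \<longleftrightarrow> (AE x in M. f x = 0)"
proof -
  have "inner_H f f = 0 \<longleftrightarrow> (AE x in M. f x * f x = 0)"
    unfolding H_inner_def using integrable_in_H_mult[OF assms assms]
    by (intro integral_nonneg_eq_0_iff_AE) auto
  then show ?thesis by simp
qed

lemma inner_H_cong_AE:
  assumes "in_H f" "in_H f'" "in_H g" "in_H g'"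
    and "AE x in M. f x = f' x" "AE x in M. g x = g' x"
  shows "inner_H f g = inner_H f' g'"
  unfolding H_inner_def
  using assms by (intro integral_cong_AE) (auto intro: in_H_measurable borel_measurable_times)

lemma inner_H_eq_0_AE: "AE x in M. f x = 0 \<Longrightarrow> inner_H f g = 0"
  unfolding H_inner_def by (rule integral_eq_zero_AE) auto

lemma inner_H_lincomb:
  assumes "in_H u" "in_H v" "in_H h"
  shows "inner_H (\<lambda>x. s * u x + t * v x) h = s * inner_H u h + t * inner_H v h"
proof -
  have "inner_H (\<lambda>x. s * u x + t * v x) h = (LINT x|M. s * (u x * h x) + t * (v x * h x))"
    unfolding H_inner_def by (simp add: algebra_simps)
  also have "\<dots> = s * inner_H u h + t * inner_H v h"
    using assms by (simp add: H_inner_def integrable_in_H_mult)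
  finally show ?thesis .
qed

lemma inner_H_cmult: "inner_H (\<lambda>x. s * u x) (\<lambda>x. t * v x) = s * t * inner_H u v"
  unfolding H_inner_def by (simp add: mult_ac)

lemma inner_H_diff_cmult_self:
  assumes "in_H u" "in_H v"
  shows "inner_H (\<lambda>x. u x - s * v x) (\<lambda>x. u x - s * v x)
    = inner_H u u - 2 * s * inner_H u v + s\<^sup>2 * inner_H v v"
proof -
  have "inner_H (\<lambda>x. u x - s * v x) (\<lambda>x. u x - s * v x)
      = (LINT x|M. u x * u x - (2 * s) * (u x * v x) + s\<^sup>2 * (v x * v x))"
    unfolding H_inner_def by (simp add: algebra_simps power2_eq_square)
  also have "\<dots> = inner_H u u - 2 * s * inner_H u v + s\<^sup>2 * inner_H v v"
    using assms by (simp add: H_inner_def integrable_in_H_mult)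
  finally show ?thesis .
qed

lemma inner_H_sum:
  assumes "\<And>k. k \<in> K \<Longrightarrow> in_H (f k)" "in_H h"
  shows "inner_H (\<lambda>x. \<Sum>k\<in>K. a k * f k x) h = (\<Sum>k\<in>K. a k * inner_H (f k) h)"
proof -
  have "inner_H (\<lambda>x. \<Sum>k\<in>K. a k * f k x) h = (LINT x|M. (\<Sum>k\<in>K. a k * (f k x * h x)))"
    unfolding H_inner_def by (simp add: sum_distrib_left sum_distrib_right mult_ac)
  also have "\<dots> = (\<Sum>k\<in>K. a k * inner_H (f k) h)"
    using assms
    by (subst Bochner_Integration.integral_sum) (auto simp: H_inner_def intro: integrable_in_H_mult)
  finally show ?thesis .
qed

lemma Cauchy_Schwarz_inner_H:
  assumes "in_H f" "in_H g"
  shows "(inner_H f g)\<^sup>2 \<le> inner_H f f * inner_H g g"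
proof (rule Cauchy_Schwarz_symmetric_form[where S = "Collect in_H" and B = inner_H and u = f and v = g])
  show "\<And>u v s t. u \<in> Collect in_H \<Longrightarrow> v \<in> Collect in_H \<Longrightarrow> (\<lambda>x. s * u x + t * v x) \<in> Collect in_H"
    by (simp add: in_H_lincomb)
  show "\<And>u v h s t. u \<in> Collect in_H \<Longrightarrow> v \<in> Collect in_H \<Longrightarrow> h \<in> Collect in_H \<Longrightarrow>
      inner_H (\<lambda>x. s * u x + t * v x) h = s * inner_H u h + t * inner_H v h"
    by (simp add: inner_H_lincomb)
  show "\<And>u v. u \<in> Collect in_H \<Longrightarrow> v \<in> Collect in_H \<Longrightarrow> inner_H u v = inner_H v u"
    by (rule inner_H_commute)
qed (use assms inner_H_self_nonneg in auto)

lemma norm_L1_square_le: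
  assumes "in_H g"
  shows "(norm_L1 g)\<^sup>2 \<le> measure M (space M) * inner_H g g"
proof -
  have "(inner_H (\<lambda>x. \<bar>g x\<bar>) (\<lambda>x. 1))\<^sup>2
      \<le> inner_H (\<lambda>x. \<bar>g x\<bar>) (\<lambda>x. \<bar>g x\<bar>) * inner_H (\<lambda>x. 1) (\<lambda>x. 1)"
    using assms by (intro Cauchy_Schwarz_inner_H in_H_abs in_H_const)
  then show ?thesis by (simp add: H_inner_def mult.commute)
qed

lemma abs_le_one_M: "x \<in> space M \<Longrightarrow> \<bar>x\<bar> \<le> 1"
  by auto

lemma abs_power_mult_le:
  fixes y g :: real
  assumes "\<bar>y\<bar> \<le> 1"
  shows "\<bar>y ^ k * g\<bar> \<le> \<bar>g\<bar>"
proof -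
  have "\<bar>y\<bar> ^ k * \<bar>g\<bar> \<le> 1 * \<bar>g\<bar>"
    using assms by (intro mult_right_mono power_le_one) auto
  then show ?thesis by (simp add: abs_mult power_abs)
qed

lemma integrable_power_mult:
  assumes "integrable M g"
  shows "integrable M (\<lambda>y. y ^ k * g y)"
proof (rule Bochner_Integration.integrable_bound[OF integrable_abs[OF assms]])
  show "AE y in M. norm (y ^ k * g y) \<le> norm \<bar>g y\<bar>"
    by (intro AE_I2) (auto intro!: abs_power_mult_le)
  show "(\<lambda>y. y ^ k * g y) \<in> borel_measurable M"
    by (intro borel_measurable_times[OF _ borel_measurable_integrable[OF assms]] borel_measurable_M)
      auto
qed

lemma integral_abs_power_mult_le:
  assumes "in_H g"
  shows "(LINT y|M. \<bar>y ^ k * g y\<bar>) \<le> norm_L1 g"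
  using assms
  by (intro integral_mono integrable_abs integrable_power_mult in_H_integrable)
     (auto intro!: abs_power_mult_le)

lemma abs_moment_le:
  assumes "in_H g"
  shows "\<bar>moment M k g\<bar> \<le> norm_L1 g"
  unfolding moment_def
  using integral_abs_bound[of M "\<lambda>y. y ^ k * g y"] integral_abs_power_mult_le[OF assms, of k]
  by linarith

lemma integrable_kernel_mult:
  assumes "in_H g"
  shows "integrable M (\<lambda>y. exp (c * (x * y - 1)) * g y)"
proof (rule Bochner_Integration.integrable_bound)
  show "integrable M (\<lambda>y. exp (c * \<bar>x\<bar>) * \<bar>g y\<bar>)"
    using assms by (intro integrable_mult_right integrable_abs in_H_integrable)
  show "AE y in M. norm (exp (c * (x * y - 1)) * g y) \<le> norm (exp (c * \<bar>x\<bar>) * \<bar>g y\<bar>)"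
  proof (rule AE_I2)
    fix y assume "y \<in> space M"
    have "x * y \<le> \<bar>x\<bar> * \<bar>y\<bar>" by (metis abs_ge_self abs_mult)
    also have "\<dots> \<le> \<bar>x\<bar>" using abs_le_one_M[OF \<open>y \<in> space M\<close>] by (simp add: mult_left_le)
    finally have "x * y - 1 \<le> \<bar>x\<bar>" by simp
    then have "exp (c * (x * y - 1)) \<le> exp (c * \<bar>x\<bar>)" using c_pos by simp
    then show "norm (exp (c * (x * y - 1)) * g y) \<le> norm (exp (c * \<bar>x\<bar>) * \<bar>g y\<bar>)"
      by (simp add: abs_mult mult_right_mono)
  qed
  show "(\<lambda>y. exp (c * (x * y - 1)) * g y) \<in> borel_measurable M"
    using assms by (intro borel_measurable_times in_H_measurable borel_measurable_M) auto
qed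

lemma Fc_lincomb:
  assumes "in_H u" "in_H v"
  shows "F (\<lambda>y. s * u y + t * v y) = (\<lambda>x. s * F u x + t * F v x)"
proof
  fix x
  have "F (\<lambda>y. s * u y + t * v y) x
      = (LINT y|M. s * (exp (c * (x * y - 1)) * u y) + t * (exp (c * (x * y - 1)) * v y))"
    unfolding Fc_def by (simp add: algebra_simps)
  also have "\<dots> = s * F u x + t * F v x"
    using assms by (simp add: Fc_def integrable_kernel_mult)
  finally show "F (\<lambda>y. s * u y + t * v y) x = s * F u x + t * F v x" .
qed

lemma Fc_cmult: "in_H u \<Longrightarrow> F (\<lambda>y. t * u y) = (\<lambda>x. t * F u x)"
  using Fc_lincomb[of u u t 0] by simp

lemma abs_Fc_le_norm_L1:
  assumes "in_H g" "\<bar>x\<bar> \<le> 1"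
  shows "\<bar>F g x\<bar> \<le> norm_L1 g"
proof -
  have "\<bar>F g x\<bar> \<le> (LINT y|M. \<bar>exp (c * (x * y - 1)) * g y\<bar>)"
    unfolding Fc_def by (rule integral_abs_bound)
  also have "\<dots> \<le> norm_L1 g"
  proof (intro integral_mono integrable_abs integrable_kernel_mult in_H_integrable assms)
    fix y assume "y \<in> space M"
    have "x * y \<le> \<bar>x\<bar> * \<bar>y\<bar>" by (metis abs_ge_self abs_mult)
    also have "\<dots> \<le> 1" using assms(2) abs_le_one_M[OF \<open>y \<in> space M\<close>] by (simp add: mult_le_one)
    finally have "x * y \<le> 1" .
    then have "exp (c * (x * y - 1)) \<le> 1" using c_pos by (simp add: mult_nonneg_nonpos)
    then show "\<bar>exp (c * (x * y - 1)) * g y\<bar> \<le> \<bar>g y\<bar>"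
      by (simp add: abs_mult mult_left_le_one_le)
  qed
  finally show ?thesis .
qed

lemma abs_poisson_term_le:
  fixes y z :: real
  assumes "\<bar>a\<bar> \<le> B" "\<bar>y\<bar> \<le> 1"
  shows "\<bar>poisson_weight c k * a * (y ^ k * z)\<bar> \<le> poisson_weight c k * B * \<bar>z\<bar>"
proof -
  have "\<bar>a\<bar> * \<bar>y ^ k * z\<bar> \<le> B * \<bar>z\<bar>"
    using assms abs_power_mult_le[OF assms(2)] by (intro mult_mono) auto
  then show ?thesis
    using poisson_weight_pos[OF c_pos, of k] by (simp add: abs_mult mult.assoc mult_left_mono)
qed

lemma sums_integral_poisson_series:
  assumes h: "integrable M h" and a: "\<And>k. \<bar>a k\<bar> \<le> B"
  shows "(\<lambda>k. poisson_weight c k * a k * (LINT y|M. y ^ k * h y))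
    sums (LINT y|M. (\<Sum>k. poisson_weight c k * a k * y ^ k) * h y)"
proof -
  define f where "f k y = poisson_weight c k * a k * (y ^ k * h y)" for k y
  have term_le: "\<bar>f k y\<bar> \<le> poisson_weight c k * B * \<bar>h y\<bar>" if "y \<in> space M" for k y
    unfolding f_def using a abs_le_one_M[OF that] by (rule abs_poisson_term_le)
  have "(\<lambda>k. integral\<^sup>L M (f k)) sums (LINT y|M. (\<Sum>k. f k y))"
  proof (rule sums_integral)
    show "integrable M (f k)" for k
      unfolding f_def by (intro integrable_mult_right integrable_power_mult h)
    show "AE y in M. summable (\<lambda>k. norm (f k y))"
      using term_le
      by (intro AE_I2 summable_comparison_test'[OF summable_mult2[OF summable_poisson_weight]])
         (auto simp: mult.assoc)
    have "(LINT y|M. norm (f k y)) \<le> poisson_weight c k * B * norm_L1 h" for k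
      using term_le
      by (subst integral_mult_right_zero[symmetric], intro integral_mono)
         (auto intro!: integrable_power_mult h simp: f_def)
    then show "summable (\<lambda>k. LINT y|M. norm (f k y))"
      by (intro summable_comparison_test'[OF summable_poisson_weight[of c "B * norm_L1 h"]])
         (auto simp: mult.assoc)
  qed
  moreover have "(\<Sum>k. f k y) = (\<Sum>k. poisson_weight c k * a k * y ^ k) * h y"
    if "y \<in> space M" for y
  proof -
    have "summable (\<lambda>k. poisson_weight c k * a k * y ^ k)"
    proof (rule summable_comparison_test'[OF summable_poisson_weight[of c B]])
      fix k
      show "norm (poisson_weight c k * a k * y ^ k) \<le> poisson_weight c k * B"
        using abs_poisson_term_le[OF a[of k] abs_le_one_M[OF that], where k = k and z = 1] by simp
    qed
    then show ?thesis by (simp add: f_def suminf_mult2 mult.assoc)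
  qed
  then have "(LINT y|M. (\<Sum>k. f k y)) = (LINT y|M. (\<Sum>k. poisson_weight c k * a k * y ^ k) * h y)"
    by (intro Bochner_Integration.integral_cong) auto
  moreover have "integral\<^sup>L M (f k) = poisson_weight c k * a k * (LINT y|M. y ^ k * h y)" for k
    by (simp add: f_def[abs_def])
  ultimately show ?thesis by simp
qed

lemma Fc_sums:
  assumes "in_H g" "\<bar>x\<bar> \<le> 1"
  shows "(\<lambda>k. poisson_weight c k * x ^ k * moment M k g) sums F g x"
proof -
  have "(\<lambda>k. poisson_weight c k * x ^ k * moment M k g)
      sums (LINT y|M. (\<Sum>k. poisson_weight c k * x ^ k * y ^ k) * g y)"
    unfolding moment_def using assms
    by (intro sums_integral_poisson_series[where B = 1] in_H_integrable)
       (auto simp: power_abs intro: power_le_one)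
  moreover have "(\<Sum>k. poisson_weight c k * x ^ k * y ^ k) = exp (c * (x * y - 1))" for y
    using sums_unique[OF exp_kernel_sums[of c x y]] by (simp add: power_mult_distrib mult.assoc)
  ultimately show ?thesis by (simp add: Fc_def)
qed

lemma Fc_measurable:
  assumes "in_H g"
  shows "F g \<in> borel_measurable M"
proof (rule borel_measurable_LIMSEQ_real)
  show "(\<lambda>n. \<Sum>k<n. poisson_weight c k * x ^ k * moment M k g) \<longlonglongrightarrow> F g x" if "x \<in> space M" for x
    using Fc_sums[OF assms abs_le_one_M[OF that]] by (simp add: sums_def)
qed (intro borel_measurable_M, simp)

lemma Fc_in_H: "in_H g \<Longrightarrow> in_H (F g)"
  by (rule in_H_bounded[OF Fc_measurable]) (auto intro: abs_Fc_le_norm_L1)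

lemma inner_H_Fc_sums:
  assumes "in_H u" "in_H v"
  shows "(\<lambda>k. poisson_weight c k * moment M k u * moment M k v) sums inner_H (F u) v"
proof -
  have "(\<lambda>k. poisson_weight c k * moment M k u * moment M k v)
      sums (LINT y|M. (\<Sum>k. poisson_weight c k * moment M k u * y ^ k) * v y)"
    unfolding moment_def[of M _ v] using assms
    by (intro sums_integral_poisson_series[where B = "norm_L1 u"] in_H_integrable abs_moment_le)
  moreover have "(\<Sum>k. poisson_weight c k * moment M k u * y ^ k) = F u y" if "y \<in> space M" for y
    using sums_unique[OF Fc_sums[OF assms(1) abs_le_one_M[OF that]]] by (simp add: mult_ac)
  then have "(LINT y|M. (\<Sum>k. poisson_weight c k * moment M k u * y ^ k) * v y) = inner_H (F u) v"
    unfolding H_inner_def by (intro Bochner_Integration.integral_cong) auto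
  ultimately show ?thesis by simp
qed

lemma inner_H_Fc_commute:
  assumes "in_H u" "in_H v"
  shows "inner_H (F u) v = inner_H (F v) u"
  using inner_H_Fc_sums[OF assms] inner_H_Fc_sums[OF assms(2,1)]
  by (simp add: mult_ac sums_unique2)

lemma poisson_weight_mult_square_nonneg: "0 \<le> poisson_weight c k * m * m"
  using poisson_weight_pos[OF c_pos, of k] by (simp add: mult.assoc)

lemma inner_H_Fc_self_nonneg:
  assumes "in_H u"
  shows "0 \<le> inner_H (F u) u"
  by (rule sums_le[OF poisson_weight_mult_square_nonneg sums_zero inner_H_Fc_sums[OF assms assms]])

lemma Fc_eq_0_if_inner_H_Fc_self_eq_0:
  assumes "in_H u" "inner_H (F u) u = 0" "\<bar>x\<bar> \<le> 1"
  shows "F u x = 0"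
proof -
  have "poisson_weight c k * moment M k u * moment M k u = 0" for k
  proof -
    have s: "(\<lambda>k. poisson_weight c k * moment M k u * moment M k u) sums 0"
      using inner_H_Fc_sums[OF assms(1,1)] assms(2) by simp
    then show ?thesis
      using poisson_weight_mult_square_nonneg sums_unique[OF s] suminf_eq_zero_iff[OF sums_summable[OF s]]
      by auto
  qed
  then have "moment M k u = 0" for k
    using poisson_weight_pos[OF c_pos, of k] by (metis mult_eq_0_iff order_less_irrefl)
  then show ?thesis using Fc_sums[OF assms(1,3)] by (simp add: sums_iff)
qed

lemma inner_H_Fc_lincomb:
  assumes "in_H u" "in_H v" "in_H h"
  shows "inner_H (F (\<lambda>y. s * u y + t * v y)) h = s * inner_H (F u) h + t * inner_H (F v) h"
  using assms by (simp add: Fc_lincomb inner_H_lincomb Fc_in_H)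

lemma Cauchy_Schwarz_inner_H_Fc:
  assumes "in_H u" "in_H v"
  shows "(inner_H (F u) v)\<^sup>2 \<le> inner_H (F u) u * inner_H (F v) v"
proof (rule Cauchy_Schwarz_symmetric_form[where S = "Collect in_H" and B = "\<lambda>u. inner_H (F u)"
      and u = u and v = v])
  show "\<And>u v s t. u \<in> Collect in_H \<Longrightarrow> v \<in> Collect in_H \<Longrightarrow> (\<lambda>x. s * u x + t * v x) \<in> Collect in_H"
    by (simp add: in_H_lincomb)
  show "\<And>u v h s t. u \<in> Collect in_H \<Longrightarrow> v \<in> Collect in_H \<Longrightarrow> h \<in> Collect in_H \<Longrightarrow>
      inner_H (F (\<lambda>x. s * u x + t * v x)) h = s * inner_H (F u) h + t * inner_H (F v) h"
    by (simp add: inner_H_Fc_lincomb)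
  show "\<And>u v. u \<in> Collect in_H \<Longrightarrow> v \<in> Collect in_H \<Longrightarrow> inner_H (F u) v = inner_H (F v) u"
    by (simp add: inner_H_Fc_commute)
  show "\<And>u. u \<in> Collect in_H \<Longrightarrow> 0 \<le> inner_H (F u) u"
    by (simp add: inner_H_Fc_self_nonneg)
qed (use assms in simp_all)

lemma inner_H_Fc_self_le:
  assumes "in_H g"
  shows "inner_H (F g) g \<le> measure M (space M) * inner_H g g"
proof -
  have "inner_H (F g) g \<le> (LINT x|M. norm_L1 g * \<bar>g x\<bar>)"
    unfolding H_inner_def
  proof (rule integral_mono)
    show "integrable M (\<lambda>x. F g x * g x)" using assms by (intro integrable_in_H_mult Fc_in_H)
    show "integrable M (\<lambda>x. norm_L1 g * \<bar>g x\<bar>)"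
      using assms by (intro integrable_mult_right integrable_abs in_H_integrable)
    show "F g x * g x \<le> norm_L1 g * \<bar>g x\<bar>" if "x \<in> space M" for x
    proof -
      have "F g x * g x \<le> \<bar>F g x\<bar> * \<bar>g x\<bar>" by (metis abs_ge_self abs_mult)
      also have "\<dots> \<le> norm_L1 g * \<bar>g x\<bar>"
        using abs_Fc_le_norm_L1[OF assms abs_le_one_M[OF that]] by (rule mult_right_mono) simp
      finally show ?thesis .
    qed
  qed
  also have "\<dots> = (norm_L1 g)\<^sup>2" by (simp add: power2_eq_square)
  also have "\<dots> \<le> measure M (space M) * inner_H g g" using assms by (rule norm_L1_square_le)
  finally show ?thesis .
qed

lemma Fc_subseq_convergent:
  fixes g :: "nat \<Rightarrow> real \<Rightarrow> real"
  assumes g: "\<And>j. in_H (g j)" and bound: "\<And>j. norm_L1 (g j) \<le> B"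
  obtains r where "strict_mono r" "\<And>x. \<bar>x\<bar> \<le> 1 \<Longrightarrow> convergent (\<lambda>j. F (g (r j)) x)"
proof -
  have moment_bound: "\<bar>moment M k (g j)\<bar> \<le> B" for j k
    using abs_moment_le[OF g] bound by (rule order_trans)
  obtain r where r: "strict_mono r" and conv: "\<And>k. convergent (\<lambda>j. moment M k (g (r j)))"
    by (rule bounded_double_seq_diagonal_convergent[of "\<lambda>j k. moment M k (g j)" B])
       (use moment_bound in auto)
  have "convergent (\<lambda>j. F (g (r j)) x)" if x: "\<bar>x\<bar> \<le> 1" for x
  proof -
    let ?a = "\<lambda>k j. poisson_weight c k * x ^ k * moment M k (g (r j))"
    have "(\<lambda>j. suminf (\<lambda>k. ?a k j)) \<longlonglongrightarrow> (\<Sum>k. poisson_weight c k * x ^ k * lim (\<lambda>j. moment M k (g (r j))))"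
    proof (rule tannerys_theorem[where M = "\<lambda>k. poisson_weight c k * B", THEN conjunct2, THEN conjunct2])
      show "(\<lambda>j. ?a k j) \<longlonglongrightarrow> poisson_weight c k * x ^ k * lim (\<lambda>j. moment M k (g (r j)))" for k
        using conv[of k] by (intro tendsto_mult tendsto_const) (simp add: convergent_LIMSEQ_iff)
      have "norm (?a k j) \<le> poisson_weight c k * B" for k j
      proof -
        have "\<bar>x ^ k\<bar> * \<bar>moment M k (g (r j))\<bar> \<le> 1 * B"
          using x moment_bound by (intro mult_mono) (auto simp: power_abs power_le_one)
        then show ?thesis using poisson_weight_pos[OF c_pos, of k]
          by (simp add: abs_mult mult.assoc mult_left_mono)
      qed
      then show "\<forall>\<^sub>F (k, j) in at_top \<times>\<^sub>F sequentially. norm (?a k j) \<le> poisson_weight c k * B"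
        by (simp add: always_eventually case_prod_beta)
    qed (simp_all add: summable_poisson_weight)
    moreover have "suminf (\<lambda>k. ?a k j) = F (g (r j)) x" for j
      using Fc_sums[OF g x] by (simp add: sums_iff)
    ultimately show ?thesis by (auto simp: convergent_def)
  qed
  then show ?thesis using r that by blast
qed

definition converges_boundedly :: "(nat \<Rightarrow> real \<Rightarrow> real) \<Rightarrow> (real \<Rightarrow> real) \<Rightarrow> bool" where
  "converges_boundedly u l \<longleftrightarrow> (\<forall>j. u j \<in> borel_measurable M)
    \<and> (\<exists>B. \<forall>j. \<forall>x\<in>space M. \<bar>u j x\<bar> \<le> B) \<and> (\<forall>x\<in>space M. (\<lambda>j. u j x) \<longlonglongrightarrow> l x)"

lemma converges_boundedlyE:
  assumes "converges_boundedly u l"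
  obtains B where "\<And>j. u j \<in> borel_measurable M" "\<And>j x. x \<in> space M \<Longrightarrow> \<bar>u j x\<bar> \<le> B"
    "\<And>x. x \<in> space M \<Longrightarrow> (\<lambda>j. u j x) \<longlonglongrightarrow> l x"
    "l \<in> borel_measurable M" "\<And>x. x \<in> space M \<Longrightarrow> \<bar>l x\<bar> \<le> B"
proof -
  obtain B where u: "\<And>j. u j \<in> borel_measurable M" "\<And>j x. x \<in> space M \<Longrightarrow> \<bar>u j x\<bar> \<le> B"
      "\<And>x. x \<in> space M \<Longrightarrow> (\<lambda>j. u j x) \<longlonglongrightarrow> l x"
    using assms unfolding converges_boundedly_def by blast
  have "l \<in> borel_measurable M" using u(3,1) by (rule borel_measurable_LIMSEQ_real)
  moreover have "\<bar>l x\<bar> \<le> B" if "x \<in> space M" for x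
    using u(2)[OF that] by (intro LIMSEQ_le_const2[OF tendsto_rabs[OF u(3)[OF that]]]) auto
  ultimately show ?thesis using u that by blast
qed

lemma converges_boundedly_in_H: "converges_boundedly u l \<Longrightarrow> in_H l"
  by (metis converges_boundedlyE in_H_bounded)

lemma converges_boundedly_in_H_seq: "converges_boundedly u l \<Longrightarrow> in_H (u j)"
  by (metis converges_boundedlyE in_H_bounded)

lemma converges_boundedly_lincomb:
  assumes "converges_boundedly u l" "converges_boundedly v m"
  shows "converges_boundedly (\<lambda>j x. s * u j x + t * v j x) (\<lambda>x. s * l x + t * m x)"
proof -
  obtain B B' where u: "\<And>j. u j \<in> borel_measurable M" "\<And>j x. x \<in> space M \<Longrightarrow> \<bar>u j x\<bar> \<le> B"
      "\<And>x. x \<in> space M \<Longrightarrow> (\<lambda>j. u j x) \<longlonglongrightarrow> l x"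
    and v: "\<And>j. v j \<in> borel_measurable M" "\<And>j x. x \<in> space M \<Longrightarrow> \<bar>v j x\<bar> \<le> B'"
      "\<And>x. x \<in> space M \<Longrightarrow> (\<lambda>j. v j x) \<longlonglongrightarrow> m x"
    using assms by (metis converges_boundedlyE)
  have "\<bar>s * u j x + t * v j x\<bar> \<le> \<bar>s\<bar> * B + \<bar>t\<bar> * B'" if "x \<in> space M" for j x
    using u(2)[OF that, of j] v(2)[OF that, of j]
    by (intro order_trans[OF abs_triangle_ineq] add_mono) (auto simp: abs_mult mult_left_mono)
  then show ?thesis
    using u v unfolding converges_boundedly_def
    by (intro conjI allI ballI exI tendsto_intros borel_measurable_add borel_measurable_times
        borel_measurable_const) auto
qed

lemma converges_boundedly_mult:
  assumes "converges_boundedly u l" "converges_boundedly v m"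
  shows "converges_boundedly (\<lambda>j x. u j x * v j x) (\<lambda>x. l x * m x)"
proof -
  obtain B B' where u: "\<And>j. u j \<in> borel_measurable M" "\<And>j x. x \<in> space M \<Longrightarrow> \<bar>u j x\<bar> \<le> B"
      "\<And>x. x \<in> space M \<Longrightarrow> (\<lambda>j. u j x) \<longlonglongrightarrow> l x"
    and v: "\<And>j. v j \<in> borel_measurable M" "\<And>j x. x \<in> space M \<Longrightarrow> \<bar>v j x\<bar> \<le> B'"
      "\<And>x. x \<in> space M \<Longrightarrow> (\<lambda>j. v j x) \<longlonglongrightarrow> m x"
    using assms by (metis converges_boundedlyE)
  have "\<bar>u j x * v j x\<bar> \<le> B * B'" if "x \<in> space M" for j x
    using u(2)[OF that, of j] v(2)[OF that, of j] by (simp add: abs_mult mult_mono')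
  then show ?thesis
    using u v unfolding converges_boundedly_def
    by (intro conjI allI ballI exI tendsto_intros borel_measurable_times) auto
qed

lemma integral_tendsto_converges_boundedly:
  assumes conv: "converges_boundedly u l" and h: "integrable M h"
  shows "(\<lambda>j. LINT x|M. u j x * h x) \<longlonglongrightarrow> (LINT x|M. l x * h x)"
proof -
  obtain B where u: "\<And>j. u j \<in> borel_measurable M" "\<And>j x. x \<in> space M \<Longrightarrow> \<bar>u j x\<bar> \<le> B"
      "\<And>x. x \<in> space M \<Longrightarrow> (\<lambda>j. u j x) \<longlonglongrightarrow> l x" "l \<in> borel_measurable M"
    using conv by (metis converges_boundedlyE)
  have "(\<lambda>j. integral\<^sup>L M (\<lambda>x. u j x * h x)) \<longlonglongrightarrow> integral\<^sup>L M (\<lambda>x. l x * h x)"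
  proof (rule integral_dominated_convergence[where w = "\<lambda>x. B * \<bar>h x\<bar>"])
    show "AE x in M. (\<lambda>j. u j x * h x) \<longlonglongrightarrow> l x * h x"
      using u(3) by (intro AE_I2 tendsto_mult tendsto_const)
    show "AE x in M. norm (u j x * h x) \<le> B * \<bar>h x\<bar>" for j
      using u(2) by (intro AE_I2) (simp add: abs_mult mult_right_mono)
  qed (use u h in \<open>auto intro: borel_measurable_times\<close>)
  then show ?thesis by simp
qed

lemma inner_H_tendsto_converges_boundedly:
  assumes "converges_boundedly u l" "converges_boundedly v m"
  shows "(\<lambda>j. inner_H (u j) (v j)) \<longlonglongrightarrow> inner_H l m"
  using integral_tendsto_converges_boundedly[OF converges_boundedly_mult[OF assms] integrable_M_const[of 1]]
  by (simp add: H_inner_def)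

lemma converges_boundedly_Fc:
  assumes conv: "converges_boundedly u l"
  shows "converges_boundedly (\<lambda>j. F (u j)) (F l)"
proof -
  obtain B where u: "\<And>j x. x \<in> space M \<Longrightarrow> \<bar>u j x\<bar> \<le> B"
    using conv by (metis converges_boundedlyE)
  have "(\<lambda>j. F (u j) x) \<longlonglongrightarrow> F l x" for x
  proof -
    have "(\<lambda>j. LINT y|M. u j y * exp (c * (x * y - 1))) \<longlonglongrightarrow> (LINT y|M. l y * exp (c * (x * y - 1)))"
      using conv integrable_kernel_mult[OF in_H_const[of 1], of x]
      by (intro integral_tendsto_converges_boundedly) simp_all
    then show ?thesis by (simp add: Fc_def mult.commute)
  qed
  moreover have "\<bar>F (u j) x\<bar> \<le> B * measure M (space M)" if "x \<in> space M" for j x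
  proof -
    have "\<bar>F (u j) x\<bar> \<le> norm_L1 (u j)"
      using conv abs_le_one_M[OF that] by (intro abs_Fc_le_norm_L1 converges_boundedly_in_H_seq)
    also have "\<dots> \<le> (LINT y|M. B)"
      using u conv
      by (intro integral_mono integrable_abs in_H_integrable converges_boundedly_in_H_seq
          integrable_M_const) auto
    finally show ?thesis by (simp add: mult.commute)
  qed
  moreover have "F (u j) \<in> borel_measurable M" for j
    using conv by (intro Fc_measurable converges_boundedly_in_H_seq)
  ultimately show ?thesis unfolding converges_boundedly_def by blast
qed

lemma Fc_subseq_converges_boundedly:
  fixes g :: "nat \<Rightarrow> real \<Rightarrow> real"
  assumes g: "\<And>j. in_H (g j)" and unit: "\<And>j. inner_H (g j) (g j) \<le> 1"
  obtains r \<phi> where "strict_mono r" "converges_boundedly (\<lambda>j. F (g (r j))) \<phi>"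
proof -
  have L1: "norm_L1 (g j) \<le> sqrt (measure M (space M))" for j
  proof (rule real_le_rsqrt)
    have "(norm_L1 (g j))\<^sup>2 \<le> measure M (space M) * inner_H (g j) (g j)"
      using g by (rule norm_L1_square_le)
    also have "\<dots> \<le> measure M (space M)" using unit[of j] by (simp add: mult_left_le)
    finally show "(norm_L1 (g j))\<^sup>2 \<le> measure M (space M)" .
  qed
  obtain r where r: "strict_mono r" and conv: "\<And>x. \<bar>x\<bar> \<le> 1 \<Longrightarrow> convergent (\<lambda>j. F (g (r j)) x)"
    by (rule Fc_subseq_convergent[of g "sqrt (measure M (space M))"]) (use g L1 in blast)+
  have "converges_boundedly (\<lambda>j. F (g (r j))) (\<lambda>x. lim (\<lambda>j. F (g (r j)) x))"
    unfolding converges_boundedly_def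
  proof (intro conjI allI ballI exI)
    show "F (g (r j)) \<in> borel_measurable M" for j using g by (rule Fc_measurable)
    show "\<bar>F (g (r j)) x\<bar> \<le> sqrt (measure M (space M))" if "x \<in> space M" for j x
      using abs_Fc_le_norm_L1[OF g abs_le_one_M[OF that]] L1 by (rule order_trans)
    show "(\<lambda>j. F (g (r j)) x) \<longlonglongrightarrow> lim (\<lambda>j. F (g (r j)) x)" if "x \<in> space M" for x
      using conv[OF abs_le_one_M[OF that]] by (simp add: convergent_LIMSEQ_iff)
  qed
  then show ?thesis using r that by blast
qed

end

locale laplace_jacobi_eigensystem = laplace_jacobi +
  fixes \<psi> :: "nat \<Rightarrow> real \<Rightarrow> real" and \<mu> :: "nat \<Rightarrow> real"
  assumes psi_in_H: "inH \<alpha> \<beta> (\<psi> n)"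
    and Fc_psi: "x \<in> {-1<..<1} \<Longrightarrow> Fc \<alpha> \<beta> c (\<psi> n) x = \<mu> n * \<psi> n x"
    and psi_nonzero: "\<not> (AE x in jac_M \<alpha> \<beta>. \<psi> n x = 0)"
    and inner_H_psi: "H_inner \<alpha> \<beta> (\<psi> n) (\<psi> m) = (if m = n then (\<mu> n)\<^sup>2 else 0)"
    and eigenfunction_in_span: "inH \<alpha> \<beta> \<phi> \<Longrightarrow> (AE x in jac_M \<alpha> \<beta>. Fc \<alpha> \<beta> c \<phi> x = lam * \<phi> x)
      \<Longrightarrow> \<not> (AE x in jac_M \<alpha> \<beta>. \<phi> x = 0)
      \<Longrightarrow> \<exists>N a. AE x in jac_M \<alpha> \<beta>. \<phi> x = (\<Sum>k<N. a k * \<psi> k x)"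
begin

lemma mu_nonzero: "\<mu> n \<noteq> 0"
  using inner_H_psi[of n n] inner_H_self_eq_0_iff[OF psi_in_H] psi_nonzero by force

lemma inner_H_Fc_psi: "inner_H (F (\<psi> n)) g = \<mu> n * inner_H (\<psi> n) g"
proof -
  have "inner_H (F (\<psi> n)) g = (LINT x|M. \<mu> n * (\<psi> n x * g x))"
    unfolding H_inner_def by (intro Bochner_Integration.integral_cong) (simp_all add: Fc_psi)
  then show ?thesis by (simp add: H_inner_def)
qed

definition psi_perp :: "(real \<Rightarrow> real) \<Rightarrow> bool" where
  "psi_perp g \<longleftrightarrow> in_H g \<and> (\<forall>n. inner_H g (\<psi> n) = 0)"

lemma psi_perp_in_H: "psi_perp g \<Longrightarrow> in_H g"
  by (simp add: psi_perp_def)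

lemma psi_perp_lincomb: "psi_perp u \<Longrightarrow> psi_perp v \<Longrightarrow> psi_perp (\<lambda>x. s * u x + t * v x)"
  by (simp add: psi_perp_def in_H_lincomb inner_H_lincomb psi_in_H)

lemma psi_perp_cmult: "psi_perp h \<Longrightarrow> psi_perp (\<lambda>x. t * h x)"
  using psi_perp_lincomb[of h h t 0] by simp

lemma psi_perp_zero: "psi_perp (\<lambda>x. 0)"
  by (simp add: psi_perp_def in_H_const H_inner_def)

lemma psi_perp_Fc:
  assumes "psi_perp g"
  shows "psi_perp (F g)"
proof -
  have g: "in_H g" using assms by (rule psi_perp_in_H)
  have "inner_H (F g) (\<psi> n) = \<mu> n * inner_H g (\<psi> n)" for n
    using inner_H_Fc_commute[OF g psi_in_H] inner_H_Fc_psi inner_H_commute by metis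
  then show ?thesis using assms by (simp add: psi_perp_def Fc_in_H g)
qed

lemma psi_perp_eigenfunction_eq_0:
  assumes perp: "psi_perp \<phi>" and eigen: "AE x in M. F \<phi> x = lam * \<phi> x"
  shows "AE x in M. \<phi> x = 0"
proof (rule ccontr)
  assume nonzero: "\<not> (AE x in M. \<phi> x = 0)"
  have \<phi>: "in_H \<phi>" using perp by (rule psi_perp_in_H)
  obtain N a where span: "AE x in M. \<phi> x = (\<Sum>k<N. a k * \<psi> k x)"
    using eigenfunction_in_span[OF \<phi> eigen nonzero] by blast
  have "inner_H \<phi> \<phi> = inner_H (\<lambda>x. \<Sum>k<N. a k * \<psi> k x) \<phi>"
    using \<phi> span by (intro inner_H_cong_AE in_H_sum in_H_cmult psi_in_H) auto
  also have "\<dots> = (\<Sum>k<N. a k * inner_H (\<psi> k) \<phi>)"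
    using \<phi> by (intro inner_H_sum psi_in_H)
  also have "\<dots> = 0"
    using perp by (simp add: psi_perp_def inner_H_commute)
  finally show False using nonzero inner_H_self_eq_0_iff[OF \<phi>] by blast
qed

lemma Fc_injective:
  assumes g: "in_H g" and h: "in_H h" and eq: "\<And>x. x \<in> {-1<..<1} \<Longrightarrow> F g x = F h x"
  shows "AE x in M. g x = h x"
proof -
  define d where "d = (\<lambda>x. 1 * g x + (-1) * h x)"
  have d: "in_H d" unfolding d_def using g h by (rule in_H_lincomb)
  have Fd: "F d x = 0" if "x \<in> space M" for x
    using eq[of x] that unfolding d_def Fc_lincomb[OF g h] by simp
  have "inner_H d (\<psi> n) = 0" for n
  proof -
    have "\<mu> n * inner_H d (\<psi> n) = inner_H (F d) (\<psi> n)"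
      using inner_H_Fc_commute[OF d psi_in_H] inner_H_Fc_psi inner_H_commute by metis
    also have "\<dots> = 0" using Fd by (intro inner_H_eq_0_AE AE_I2)
    finally show ?thesis using mu_nonzero by simp
  qed
  then have "psi_perp d" using d by (simp add: psi_perp_def)
  moreover have "AE x in M. F d x = 0 * d x" using Fd by (intro AE_I2) simp
  ultimately have "AE x in M. d x = 0" by (rule psi_perp_eigenfunction_eq_0)
  then show ?thesis by eventually_elim (simp add: d_def)
qed

definition rayleigh_sup :: real where
  "rayleigh_sup = Sup {inner_H (F g) g | g. psi_perp g \<and> inner_H g g \<le> 1}"

lemma inner_H_Fc_le_rayleigh_sup_unit:
  assumes "psi_perp g" "inner_H g g \<le> 1"
  shows "inner_H (F g) g \<le> rayleigh_sup"
  unfolding rayleigh_sup_def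
proof (rule cSup_upper)
  show "bdd_above {inner_H (F g) g | g. psi_perp g \<and> inner_H g g \<le> 1}"
  proof (rule bdd_aboveI, safe)
    fix g assume "psi_perp g" "inner_H g g \<le> 1"
    then have "inner_H (F g) g \<le> measure M (space M) * inner_H g g"
      by (intro inner_H_Fc_self_le psi_perp_in_H)
    also have "\<dots> \<le> measure M (space M)"
      using \<open>inner_H g g \<le> 1\<close> by (simp add: mult_left_le)
    finally show "inner_H (F g) g \<le> measure M (space M)" .
  qed
qed (use assms in blast)

lemma rayleigh_sup_nonneg: "0 \<le> rayleigh_sup"
  using inner_H_Fc_le_rayleigh_sup_unit[OF psi_perp_zero] by (simp add: H_inner_def)

lemma inner_H_Fc_le_rayleigh_sup:
  assumes perp: "psi_perp h"
  shows "inner_H (F h) h \<le> rayleigh_sup * inner_H h h"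
proof (cases "inner_H h h = 0")
  case True
  have h: "in_H h" using perp by (rule psi_perp_in_H)
  have "inner_H h (F h) = 0"
    using True by (intro inner_H_eq_0_AE) (simp add: inner_H_self_eq_0_iff[OF h])
  then show ?thesis using True by (simp add: inner_H_commute)
next
  case False
  have h: "in_H h" using perp by (rule psi_perp_in_H)
  define r where "r = 1 / sqrt (inner_H h h)"
  have r2: "r\<^sup>2 * inner_H h h = 1"
    using False inner_H_self_nonneg[of h] by (simp add: r_def power_divide)
  have "inner_H (F (\<lambda>x. r * h x)) (\<lambda>x. r * h x) = r\<^sup>2 * inner_H (F h) h"
    using inner_H_cmult[of r "F h" r h] by (simp add: Fc_cmult[OF h] power2_eq_square)
  moreover have "inner_H (F (\<lambda>x. r * h x)) (\<lambda>x. r * h x) \<le> rayleigh_sup"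
    using r2 by (intro inner_H_Fc_le_rayleigh_sup_unit psi_perp_cmult perp) (simp add: inner_H_cmult power2_eq_square)
  ultimately have "r\<^sup>2 * inner_H (F h) h \<le> rayleigh_sup" by simp
  then have "(r\<^sup>2 * inner_H (F h) h) * inner_H h h \<le> rayleigh_sup * inner_H h h"
    using inner_H_self_nonneg[of h] by (rule mult_right_mono)
  moreover have "(r\<^sup>2 * inner_H (F h) h) * inner_H h h = inner_H (F h) h"
    using r2 by (simp add: mult_ac)
  ultimately show ?thesis by simp
qed

lemma inner_H_Fc_Fc_le_rayleigh_sup:
  assumes perp: "psi_perp g"
  shows "inner_H (F g) (F g) \<le> rayleigh_sup * inner_H (F g) g"
proof -
  have g: "in_H g" using perp by (rule psi_perp_in_H)
  let ?h = "F g"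
  have "(inner_H ?h ?h)\<^sup>2 \<le> inner_H (F g) g * inner_H (F ?h) ?h"
    using Cauchy_Schwarz_inner_H_Fc[OF g Fc_in_H[OF g]] .
  also have "\<dots> \<le> inner_H (F g) g * (rayleigh_sup * inner_H ?h ?h)"
    by (intro mult_left_mono inner_H_Fc_le_rayleigh_sup psi_perp_Fc perp inner_H_Fc_self_nonneg g)
  finally have "inner_H ?h ?h * inner_H ?h ?h \<le> (rayleigh_sup * inner_H (F g) g) * inner_H ?h ?h"
    by (simp add: power2_eq_square mult_ac)
  then show ?thesis
    using inner_H_self_nonneg[of ?h] rayleigh_sup_nonneg inner_H_Fc_self_nonneg[OF g]
    by (cases "inner_H ?h ?h = 0") auto
qed

text \<open>If \<open>g\<close> nearly maximises the Rayleigh quotient, \<open>F g\<close> is nearly an eigenfunction with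
  eigenvalue \<open>rayleigh_sup\<close>.\<close>

lemma eigen_defect_le:
  assumes perp: "psi_perp g" and unit: "inner_H g g \<le> 1"
  defines "s \<equiv> rayleigh_sup"
  shows "inner_H (\<lambda>x. F (F g) x - s * F g x) (\<lambda>x. F (F g) x - s * F g x)
    \<le> s * (s * (s * (s - inner_H (F g) g)))"
proof -
  have g: "in_H g" using perp by (rule psi_perp_in_H)
  have Fg: "in_H (F g)" using g by (rule Fc_in_H)
  define u where "u = (\<lambda>y. F g y - s * g y)"
  have u_perp: "psi_perp u"
    using psi_perp_lincomb[OF psi_perp_Fc[OF perp] perp, of 1 "-s"] by (simp add: u_def)
  have Fu: "F u = (\<lambda>x. F (F g) x - s * F g x)"
    using Fc_lincomb[OF Fg g, of 1 "-s"] by (simp add: u_def)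
  have "inner_H u u = inner_H (F g) (F g) - 2 * s * inner_H (F g) g + s\<^sup>2 * inner_H g g"
    unfolding u_def using Fg g by (rule inner_H_diff_cmult_self)
  also have "\<dots> \<le> s * inner_H (F g) g - 2 * s * inner_H (F g) g + s\<^sup>2 * 1"
    using inner_H_Fc_Fc_le_rayleigh_sup[OF perp] unit rayleigh_sup_nonneg
    by (intro add_mono diff_mono mult_left_mono) (simp_all add: s_def)
  finally have uu: "inner_H u u \<le> s * (s - inner_H (F g) g)"
    by (simp add: algebra_simps power2_eq_square)
  have "inner_H (F u) (F u) \<le> s * inner_H (F u) u"
    unfolding s_def by (rule inner_H_Fc_Fc_le_rayleigh_sup[OF u_perp])
  also have "\<dots> \<le> s * (s * inner_H u u)"
    using rayleigh_sup_nonneg by (simp add: s_def mult_left_mono inner_H_Fc_le_rayleigh_sup[OF u_perp])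
  also have "\<dots> \<le> s * (s * (s * (s - inner_H (F g) g)))"
    using rayleigh_sup_nonneg uu by (simp add: s_def mult_left_mono)
  finally show ?thesis by (simp add: Fu)
qed

lemma rayleigh_maximizing_sequence:
  obtains g where "\<And>j. psi_perp (g j)" "\<And>j. inner_H (g j) (g j) \<le> 1"
    "(\<lambda>j. inner_H (F (g j)) (g j)) \<longlonglongrightarrow> rayleigh_sup"
proof -
  let ?S = "{inner_H (F g) g | g. psi_perp g \<and> inner_H g g \<le> 1}"
  have "inner_H (F (\<lambda>x. 0)) (\<lambda>x. 0) \<in> ?S"
    using psi_perp_zero by (intro CollectI exI[of _ "\<lambda>x. 0"]) (simp add: H_inner_def)
  then have ne: "?S \<noteq> {}" by blast
  have "\<forall>j. \<exists>g. psi_perp g \<and> inner_H g g \<le> 1 \<and> rayleigh_sup - inverse (real (Suc j)) < inner_H (F g) g"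
  proof
    fix j
    have "rayleigh_sup - inverse (real (Suc j)) < Sup ?S"
      unfolding rayleigh_sup_def[symmetric] by simp
    then obtain y where "y \<in> ?S" "rayleigh_sup - inverse (real (Suc j)) < y"
      using less_cSupD[OF ne] by blast
    then show "\<exists>g. psi_perp g \<and> inner_H g g \<le> 1 \<and> rayleigh_sup - inverse (real (Suc j)) < inner_H (F g) g"
      by blast
  qed
  then obtain g where g: "\<forall>j. psi_perp (g j) \<and> inner_H (g j) (g j) \<le> 1
      \<and> rayleigh_sup - inverse (real (Suc j)) < inner_H (F (g j)) (g j)"
    by (metis (no_types, lifting) choice)
  have "(\<lambda>j. inner_H (F (g j)) (g j)) \<longlonglongrightarrow> rayleigh_sup"
  proof (rule tendsto_sandwich[OF _ _ _ tendsto_const])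
    show "\<forall>\<^sub>F j in sequentially. rayleigh_sup - inverse (real (Suc j)) \<le> inner_H (F (g j)) (g j)"
      using g by (simp add: less_imp_le)
    show "\<forall>\<^sub>F j in sequentially. inner_H (F (g j)) (g j) \<le> rayleigh_sup"
      using g by (simp add: inner_H_Fc_le_rayleigh_sup_unit)
    show "(\<lambda>j. rayleigh_sup - inverse (real (Suc j))) \<longlonglongrightarrow> rayleigh_sup"
      using tendsto_diff[OF tendsto_const LIMSEQ_inverse_real_of_nat, of rayleigh_sup] by simp
  qed
  then show ?thesis using g that by blast
qed

lemma psi_perp_converges_boundedly:
  assumes conv: "converges_boundedly u l" and perp: "\<And>j. psi_perp (u j)"
  shows "psi_perp l"
proof -
  have "(\<lambda>j. inner_H (u j) (\<psi> n)) \<longlonglongrightarrow> inner_H l (\<psi> n)" for n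
    unfolding H_inner_def using conv psi_in_H
    by (intro integral_tendsto_converges_boundedly in_H_integrable)
  moreover have "inner_H (u j) (\<psi> n) = 0" for j n
    using perp by (simp add: psi_perp_def)
  ultimately have "(\<lambda>j. 0) \<longlonglongrightarrow> inner_H l (\<psi> n)" for n
    by simp
  then have "inner_H l (\<psi> n) = 0" for n
    by (simp add: LIMSEQ_const_iff)
  then show ?thesis using conv by (simp add: psi_perp_def converges_boundedly_in_H)
qed

lemma rayleigh_limit_eigen:
  fixes g :: "nat \<Rightarrow> real \<Rightarrow> real"
  assumes perp: "\<And>j. psi_perp (g j)" and unit: "\<And>j. inner_H (g j) (g j) \<le> 1"
    and maximizing: "(\<lambda>j. inner_H (F (g j)) (g j)) \<longlonglongrightarrow> rayleigh_sup"
    and conv: "converges_boundedly (\<lambda>j. F (g j)) \<phi>"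
  shows "AE x in M. F \<phi> x = rayleigh_sup * \<phi> x"
proof -
  define s where "s = rayleigh_sup"
  let ?D = "\<lambda>j x. F (F (g j)) x - s * F (g j) x" and ?D\<phi> = "\<lambda>x. F \<phi> x - s * \<phi> x"
  have "converges_boundedly ?D ?D\<phi>"
    using converges_boundedly_lincomb[OF converges_boundedly_Fc[OF conv] conv, of 1 "-s"] by simp
  then have "(\<lambda>j. inner_H (?D j) (?D j)) \<longlonglongrightarrow> inner_H ?D\<phi> ?D\<phi>"
    by (intro inner_H_tendsto_converges_boundedly)
  moreover have "(\<lambda>j. inner_H (?D j) (?D j)) \<longlonglongrightarrow> 0"
  proof (rule tendsto_sandwich[OF _ _ tendsto_const])
    show "\<forall>\<^sub>F j in sequentially. 0 \<le> inner_H (?D j) (?D j)"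
      by (simp add: inner_H_self_nonneg)
    show "\<forall>\<^sub>F j in sequentially. inner_H (?D j) (?D j) \<le> s * (s * (s * (s - inner_H (F (g j)) (g j))))"
      using eigen_defect_le[OF perp unit] by (simp add: s_def always_eventually)
    have "(\<lambda>j. s - inner_H (F (g j)) (g j)) \<longlonglongrightarrow> 0"
      using tendsto_diff[OF tendsto_const maximizing, of s] by (simp add: s_def)
    then show "(\<lambda>j. s * (s * (s * (s - inner_H (F (g j)) (g j))))) \<longlonglongrightarrow> 0"
      by (intro tendsto_mult_right_zero)
  qed
  ultimately have "inner_H ?D\<phi> ?D\<phi> = 0"
    by (rule LIMSEQ_unique)
  moreover have "in_H \<phi>" using conv by (rule converges_boundedly_in_H)
  then have "in_H ?D\<phi>"
    using in_H_lincomb[OF Fc_in_H, of \<phi> \<phi> 1 "-s"] by simp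
  ultimately have "AE x in M. F \<phi> x - s * \<phi> x = 0"
    by (simp add: inner_H_self_eq_0_iff)
  then show ?thesis by eventually_elim (simp add: s_def)
qed

lemma rayleigh_limit_norm_ge:
  fixes g :: "nat \<Rightarrow> real \<Rightarrow> real"
  assumes g: "\<And>j. in_H (g j)" and unit: "\<And>j. inner_H (g j) (g j) \<le> 1"
    and maximizing: "(\<lambda>j. inner_H (F (g j)) (g j)) \<longlonglongrightarrow> rayleigh_sup"
    and conv: "converges_boundedly (\<lambda>j. F (g j)) \<phi>"
  shows "inner_H \<phi> \<phi> \<ge> rayleigh_sup\<^sup>2"
proof (rule LIMSEQ_le[OF tendsto_power[OF maximizing] inner_H_tendsto_converges_boundedly[OF conv conv]])
  have "(inner_H (F (g j)) (g j))\<^sup>2 \<le> inner_H (F (g j)) (F (g j))" for j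
  proof -
    have "(inner_H (F (g j)) (g j))\<^sup>2 \<le> inner_H (F (g j)) (F (g j)) * inner_H (g j) (g j)"
      using Fc_in_H[OF g] g by (rule Cauchy_Schwarz_inner_H)
    also have "\<dots> \<le> inner_H (F (g j)) (F (g j))"
      using unit inner_H_self_nonneg by (simp add: mult_left_le)
    finally show ?thesis .
  qed
  then show "\<exists>N. \<forall>n\<ge>N. (inner_H (F (g n)) (g n))\<^sup>2 \<le> inner_H (F (g n)) (F (g n))" by blast
qed

lemma rayleigh_sup_eigenfunction:
  obtains \<phi> where "psi_perp \<phi>" "AE x in M. F \<phi> x = rayleigh_sup * \<phi> x"
    "inner_H \<phi> \<phi> \<ge> rayleigh_sup\<^sup>2"
proof -
  obtain g where perp: "\<And>j. psi_perp (g j)" and unit: "\<And>j. inner_H (g j) (g j) \<le> 1"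
    and maximizing: "(\<lambda>j. inner_H (F (g j)) (g j)) \<longlonglongrightarrow> rayleigh_sup"
    by (rule rayleigh_maximizing_sequence) blast
  obtain r \<phi> where r: "strict_mono r" and conv: "converges_boundedly (\<lambda>j. F (g (r j))) \<phi>"
    using Fc_subseq_converges_boundedly[of g] perp unit psi_perp_in_H by blast
  have maximizing_r: "(\<lambda>j. inner_H (F (g (r j))) (g (r j))) \<longlonglongrightarrow> rayleigh_sup"
    using LIMSEQ_subseq_LIMSEQ[OF maximizing r] by (simp add: o_def)
  have "psi_perp \<phi>"
    using conv by (rule psi_perp_converges_boundedly) (simp add: psi_perp_Fc perp)
  moreover have "AE x in M. F \<phi> x = rayleigh_sup * \<phi> x"
    using perp unit maximizing_r conv by (rule rayleigh_limit_eigen)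
  moreover have "inner_H \<phi> \<phi> \<ge> rayleigh_sup\<^sup>2"
    using psi_perp_in_H[OF perp] unit maximizing_r conv by (rule rayleigh_limit_norm_ge)
  ultimately show ?thesis using that by blast
qed

lemma rayleigh_sup_eq_0: "rayleigh_sup = 0"
proof -
  obtain \<phi> where perp: "psi_perp \<phi>" and eigen: "AE x in M. F \<phi> x = rayleigh_sup * \<phi> x"
    and norm: "inner_H \<phi> \<phi> \<ge> rayleigh_sup\<^sup>2"
    by (rule rayleigh_sup_eigenfunction)
  from perp eigen have "AE x in M. \<phi> x = 0" by (rule psi_perp_eigenfunction_eq_0)
  then have "inner_H \<phi> \<phi> = 0" by (rule inner_H_eq_0_AE)
  then show ?thesis using norm by simp
qed

lemma Fc_eq_0_on_psi_perp:
  assumes perp: "psi_perp g" and x: "\<bar>x\<bar> \<le> 1"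
  shows "F g x = 0"
proof -
  have g: "in_H g" using perp by (rule psi_perp_in_H)
  have "inner_H (F g) g = 0"
    using inner_H_Fc_le_rayleigh_sup[OF perp] inner_H_Fc_self_nonneg[OF g]
    by (simp add: rayleigh_sup_eq_0)
  then show ?thesis using Fc_eq_0_if_inner_H_Fc_self_eq_0[OF g _ x] by simp
qed

lemma Fc_psi_scaled: "x \<in> {-1<..<1} \<Longrightarrow> F (\<lambda>y. \<psi> n y / \<mu> n) x = \<psi> n x"
  using Fc_cmult[OF psi_in_H, of "1 / \<mu> n" n] Fc_psi[of x n] mu_nonzero[of n] by simp

lemma psi_in_LB: "\<psi> n \<in> LB \<alpha> \<beta> c"
  unfolding LB_def using Fc_psi_scaled in_H_cmult[OF psi_in_H, of "1 / \<mu> n" n] by auto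

lemma LB_pre:
  assumes "f \<in> LB \<alpha> \<beta> c"
  shows "in_H (LB_pre \<alpha> \<beta> c f)" "\<And>x. x \<in> {-1<..<1} \<Longrightarrow> f x = F (LB_pre \<alpha> \<beta> c f) x"
proof -
  have "\<exists>g. in_H g \<and> (\<forall>x\<in>{-1<..<1}. f x = F g x)" using assms unfolding LB_def by blast
  then have "in_H (LB_pre \<alpha> \<beta> c f) \<and> (\<forall>x\<in>{-1<..<1}. f x = F (LB_pre \<alpha> \<beta> c f) x)"
    unfolding LB_pre_def by (rule someI_ex)
  then show "in_H (LB_pre \<alpha> \<beta> c f)" "\<And>x. x \<in> {-1<..<1} \<Longrightarrow> f x = F (LB_pre \<alpha> \<beta> c f) x"
    by blast+
qed

lemma LB_pre_psi: "AE x in M. LB_pre \<alpha> \<beta> c (\<psi> n) x = \<psi> n x / \<mu> n"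
  using LB_pre[OF psi_in_LB] Fc_psi_scaled
  by (intro Fc_injective in_H_cmult[OF psi_in_H, of "1 / \<mu> n" n, simplified]) auto

lemma LB_inner_psi_right:
  assumes "f \<in> LB \<alpha> \<beta> c"
  shows "LB_inner \<alpha> \<beta> c f (\<psi> n) = inner_H (LB_pre \<alpha> \<beta> c f) (\<psi> n) / \<mu> n"
proof -
  have "LB_inner \<alpha> \<beta> c f (\<psi> n) = inner_H (\<lambda>x. 1 * LB_pre \<alpha> \<beta> c f x) (\<lambda>x. (1 / \<mu> n) * \<psi> n x)"
    unfolding LB_inner_def using LB_pre(1)[OF assms] LB_pre(1)[OF psi_in_LB] LB_pre_psi
    by (intro inner_H_cong_AE in_H_cmult psi_in_H) auto
  also have "\<dots> = inner_H (LB_pre \<alpha> \<beta> c f) (\<psi> n) / \<mu> n"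
    by (simp only: inner_H_cmult) simp
  finally show ?thesis .
qed

lemma LB_inner_psi: "LB_inner \<alpha> \<beta> c (\<psi> n) (\<psi> m) = (if m = n then 1 else 0)"
proof -
  have "inner_H (LB_pre \<alpha> \<beta> c (\<psi> n)) (\<psi> m) = inner_H (\<lambda>x. (1 / \<mu> n) * \<psi> n x) (\<lambda>x. 1 * \<psi> m x)"
    using LB_pre(1)[OF psi_in_LB] LB_pre_psi
    by (intro inner_H_cong_AE in_H_cmult psi_in_H) auto
  also have "\<dots> = inner_H (\<psi> n) (\<psi> m) / \<mu> n"
    by (simp only: inner_H_cmult) simp
  finally show ?thesis
    using mu_nonzero[of n] by (simp add: LB_inner_psi_right[OF psi_in_LB] inner_H_psi power2_eq_square)
qed

lemma LB_orthogonal_psi_eq_0: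
  assumes f: "f \<in> LB \<alpha> \<beta> c" and orth: "\<And>n. LB_inner \<alpha> \<beta> c f (\<psi> n) = 0"
    and x: "x \<in> {-1<..<1}"
  shows "f x = 0"
proof -
  have "psi_perp (LB_pre \<alpha> \<beta> c f)"
    using orth LB_pre(1)[OF f] mu_nonzero by (simp add: psi_perp_def LB_inner_psi_right[OF f])
  moreover have "\<bar>x\<bar> \<le> 1" using x by (simp add: abs_le_iff)
  ultimately show ?thesis using LB_pre(2)[OF f x] Fc_eq_0_on_psi_perp by simp
qed

end

theorem proposition1:
  fixes \<alpha> \<beta> c :: real and \<psi> :: "nat \<Rightarrow> real \<Rightarrow> real" and \<mu> :: "nat \<Rightarrow> real"
  assumes "\<alpha> > -1" and "\<beta> > -1" and "c > 0"
    and inH: "\<forall>n. inH \<alpha> \<beta> (\<psi> n)"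
    and eig: "\<forall>n. \<forall>x\<in>{-1<..<1}. Fc \<alpha> \<beta> c (\<psi> n) x = \<mu> n * \<psi> n x"
    and nonzero: "\<forall>n. \<not> (AE x in jac_M \<alpha> \<beta>. \<psi> n x = 0)"
    and normalized: "\<forall>n m. H_inner \<alpha> \<beta> (\<psi> n) (\<psi> m) = (if m = n then (\<mu> n)\<^sup>2 else 0)"
    and all_eigenfunctions:
      "\<forall>\<phi> lam. inH \<alpha> \<beta> \<phi> \<and> (AE x in jac_M \<alpha> \<beta>. Fc \<alpha> \<beta> c \<phi> x = lam * \<phi> x)
              \<and> \<not> (AE x in jac_M \<alpha> \<beta>. \<phi> x = 0)
         \<longrightarrow> (\<exists>N a. AE x in jac_M \<alpha> \<beta>. \<phi> x = (\<Sum>k<N. a k * \<psi> k x))"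
  shows "(\<forall>n. \<psi> n \<in> LB \<alpha> \<beta> c)
    \<and> (\<forall>n m. n \<noteq> m \<longrightarrow> LB_inner \<alpha> \<beta> c (\<psi> n) (\<psi> m) = 0)
    \<and> (\<forall>n. LB_inner \<alpha> \<beta> c (\<psi> n) (\<psi> n) \<noteq> 0)
    \<and> (\<forall>f\<in>LB \<alpha> \<beta> c. (\<forall>n. LB_inner \<alpha> \<beta> c f (\<psi> n) = 0) \<longrightarrow> (\<forall>x\<in>{-1<..<1}. f x = 0))"
proof -
  interpret laplace_jacobi_eigensystem \<alpha> \<beta> c \<psi> \<mu>
    using assms by unfold_locales blast+
  show ?thesis
    by (auto simp: psi_in_LB LB_inner_psi intro: LB_orthogonal_psi_eq_0)
qed

end
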